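(* Let $(X_n)_{n\ge1}$ be a sequence of integer-valued random variables with $\mathbb E X_n=\mu_n$ and $\operatorname{var}(X_n)=\sigma_n^2$, where $\sigma_n\to\infty$ as $n\to\infty$. Let $(\varepsilon_n)$ be a sequence of positive numbers tending to $0$ such that $$\sup_{x\in\mathbb R}\left|\sigma_n\Pr\big(X_n=\lfloor\mu_n+x\sigma_n\rfloor\big)-\frac{e^{-x^2/2}}{\sqrt{2\pi}}\right|\le\varepsilon_n\quad\text{for all }n.$$ For each $n$ let $X_n'$ be a random variable independent of $X_n$ and having the same distribution as $X_n$. Then $$\Pr(X_n=X_n')=\frac{1}{2\sqrt\pi\,\sigma_n}+O\!\left(\frac{\varepsilon_n}{\sigma_n}+\frac{1}{\sigma_n^2}\right)\quad\text{as }n\to\infty.$$ *)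

theory Defs
  imports "HOL-Probability.Probability" "HOL-Library.Landau_Symbols"
begin

end

theory Submission
  imports Defs
begin

text \<open>
  Write \<open>s = \<sigma>\<^sub>n\<close>, \<open>\<phi>\<close> for the standard normal density and \<open>G x = s \<cdot> P(X = \<lfloor>\<mu> + x s\<rfloor>)\<close>.
  Since \<open>G\<close> is a step function, \<open>\<integral> G = 1\<close> and \<open>\<integral> G\<^sup>2 = s \<cdot> P(X = X')\<close>, while \<open>\<integral> \<phi> = 1\<close>
  and \<open>\<integral> \<phi>\<^sup>2 = 1 / (2\<surd>\<pi>)\<close>. From \<open>|G\<^sup>2 - \<phi>\<^sup>2| = |G - \<phi>| (G + \<phi>) \<le> \<epsilon> (G + \<phi>)\<close> we get
  \<open>|s \<cdot> P(X = X') - 1/(2\<surd>\<pi>)| \<le> 2\<epsilon>\<close>. This already gives the error \<open>O(\<epsilon>/\<sigma>)\<close>.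
\<close>

lemma nn_integral_floor:
  fixes h :: "int \<Rightarrow> ennreal"
  shows "(\<integral>\<^sup>+(y::real). h \<lfloor>y\<rfloor> \<partial>lborel) = (\<integral>\<^sup>+k. h k \<partial>count_space UNIV)"
proof -
  have unit_interval: "indicator {of_int k..<of_int k + 1} y = (indicator {\<lfloor>y\<rfloor>} k :: ennreal)"
    for k :: int and y :: real
    by (auto simp: indicator_def floor_eq_iff) linarith+
  have "(\<integral>\<^sup>+(y::real). h \<lfloor>y\<rfloor> \<partial>lborel)
      = (\<integral>\<^sup>+(y::real). \<integral>\<^sup>+k. h k * indicator {of_int k..<of_int k + 1} y \<partial>count_space UNIV \<partial>lborel)"
  proof (rule nn_integral_cong)
    fix y :: real
    show "h \<lfloor>y\<rfloor> = (\<integral>\<^sup>+k. h k * indicator {of_int k..<of_int k + 1} y \<partial>count_space UNIV)"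
      by (simp add: unit_interval)
  qed
  also have "\<dots> = (\<integral>\<^sup>+k. \<integral>\<^sup>+(y::real). h k * indicator {of_int k..<of_int k + 1} y \<partial>lborel \<partial>count_space UNIV)"
    by (rule nn_integral_count_space_nn_integral) auto
  also have "\<dots> = (\<integral>\<^sup>+k. h k \<partial>count_space UNIV)"
    by (simp add: nn_integral_cmult_indicator)
  finally show ?thesis .
qed

lemma nn_integral_floor_affine:
  fixes h :: "int \<Rightarrow> ennreal" and s a :: real
  assumes "s > 0"
  shows "(\<integral>\<^sup>+x. h \<lfloor>a + x * s\<rfloor> \<partial>lborel) = ennreal (1 / s) * (\<integral>\<^sup>+k. h k \<partial>count_space UNIV)"
proof -
  have "(\<integral>\<^sup>+k. h k \<partial>count_space UNIV) = ennreal s * (\<integral>\<^sup>+x. h \<lfloor>a + s * x\<rfloor> \<partial>lborel)"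
    using nn_integral_real_affine[of "\<lambda>y. h \<lfloor>y\<rfloor>" s a] assms by (simp add: nn_integral_floor)
  moreover have "ennreal (1 / s) * ennreal s = 1"
    using assms by (simp flip: ennreal_mult)
  ultimately show ?thesis
    by (simp add: mult.commute mult.left_commute flip: mult.assoc)
qed

lemma emeasure_pair_pmf_diagonal:
  fixes q :: "'a pmf"
  shows "emeasure (pair_pmf q q) {z. fst z = snd z} = (\<integral>\<^sup>+k. ennreal ((pmf q k)\<^sup>2) \<partial>count_space UNIV)"
proof -
  have "emeasure (pair_pmf q q) {z. fst z = snd z} = (\<integral>\<^sup>+z. indicator {z. fst z = snd z} z \<partial>pair_pmf q q)"
    by simp
  also have "\<dots> = (\<integral>\<^sup>+a. \<integral>\<^sup>+b. indicator {a} b \<partial>q \<partial>q)"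
    unfolding nn_integral_pair_pmf' by (intro nn_integral_cong) (auto simp: indicator_def)
  also have "\<dots> = (\<integral>\<^sup>+k. ennreal ((pmf q k)\<^sup>2) \<partial>count_space UNIV)"
    by (simp add: emeasure_pmf_single nn_integral_measure_pmf power2_eq_square ennreal_mult)
  finally show ?thesis .
qed

lemma nn_integral_std_normal_density:
  "(\<integral>\<^sup>+x. ennreal (std_normal_density x) \<partial>lborel) = 1"
  by (subst nn_integral_eq_integral) auto

lemma nn_integral_std_normal_density_square:
  "(\<integral>\<^sup>+x. ennreal ((std_normal_density x)\<^sup>2) \<partial>lborel) = ennreal (1 / (2 * sqrt pi))"
proof -
  have square: "(std_normal_density x)\<^sup>2 = 1 / (2 * sqrt pi) * normal_density 0 (1 / sqrt 2) x" for x
  proof -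
    have "(exp (- x\<^sup>2 / 2))\<^sup>2 = exp (- x\<^sup>2)"
      by (simp flip: exp_of_nat_mult)
    then show ?thesis
      by (simp add: normal_density_def power_mult_distrib real_sqrt_mult power2_eq_square)
  qed
  have "(\<integral>\<^sup>+x. ennreal ((std_normal_density x)\<^sup>2) \<partial>lborel)
      = ennreal (1 / (2 * sqrt pi)) * (\<integral>\<^sup>+x. ennreal (normal_density 0 (1 / sqrt 2) x) \<partial>lborel)"
    unfolding square by (subst nn_integral_cmult[symmetric]) (auto simp flip: ennreal_mult)
  also have "(\<integral>\<^sup>+x. ennreal (normal_density 0 (1 / sqrt 2) x) \<partial>lborel) = 1"
    by (subst nn_integral_eq_integral) auto
  finally show ?thesis
    by simp
qed

lemma nn_integral_square_le_if_close:
  fixes f g :: "'a \<Rightarrow> real"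
  assumes [measurable]: "f \<in> borel_measurable M" "g \<in> borel_measurable M"
    and nonneg: "\<And>x. f x \<ge> 0" "\<And>x. g x \<ge> 0"
    and close: "\<And>x. \<bar>f x - g x\<bar> \<le> e" and "e \<ge> 0"
    and total: "(\<integral>\<^sup>+x. ennreal (f x) \<partial>M) = 1" "(\<integral>\<^sup>+x. ennreal (g x) \<partial>M) = 1"
  shows "(\<integral>\<^sup>+x. ennreal ((f x)\<^sup>2) \<partial>M) \<le> (\<integral>\<^sup>+x. ennreal ((g x)\<^sup>2) \<partial>M) + ennreal (2 * e)"
proof -
  have pointwise: "(f x)\<^sup>2 \<le> (g x)\<^sup>2 + e * f x + e * g x" for x
  proof -
    have "(f x)\<^sup>2 - (g x)\<^sup>2 = (f x - g x) * (f x + g x)"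
      by (simp add: power2_eq_square algebra_simps)
    also have "\<dots> \<le> e * (f x + g x)"
      using close[of x] nonneg[of x] by (intro mult_right_mono) auto
    finally show ?thesis
      by (simp add: algebra_simps)
  qed
  have "(\<integral>\<^sup>+x. ennreal ((f x)\<^sup>2) \<partial>M)
      \<le> (\<integral>\<^sup>+x. ennreal ((g x)\<^sup>2) + ennreal e * ennreal (f x) + ennreal e * ennreal (g x) \<partial>M)"
    using pointwise nonneg \<open>e \<ge> 0\<close>
    by (intro nn_integral_mono) (simp flip: ennreal_plus ennreal_mult)
  also have "\<dots> = (\<integral>\<^sup>+x. ennreal ((g x)\<^sup>2) \<partial>M) + ennreal e + ennreal e"
    by (simp add: nn_integral_add nn_integral_cmult total)
  also have "\<dots> = (\<integral>\<^sup>+x. ennreal ((g x)\<^sup>2) \<partial>M) + ennreal (2 * e)"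
    using \<open>e \<ge> 0\<close> by (simp add: add.assoc flip: ennreal_plus)
  finally show ?thesis .
qed

lemma collision_probability_close_to_gaussian:
  fixes q :: "int pmf" and a s e :: real
  assumes "s > 0"
    and local_limit: "\<And>x. \<bar>s * pmf q \<lfloor>a + x * s\<rfloor> - std_normal_density x\<bar> \<le> e"
  shows "\<bar>measure_pmf.prob (pair_pmf q q) {z. fst z = snd z} - 1 / (2 * sqrt pi * s)\<bar> \<le> 2 * e / s"
proof -
  define G where "G x = s * pmf q \<lfloor>a + x * s\<rfloor>" for x :: real
  define D where "D = measure_pmf.prob (pair_pmf q q) {z. fst z = snd z}"
  define c where "c = 1 / (2 * sqrt pi)"
  have "e \<ge> 0"
    using local_limit[of 0] by linarith
  have [measurable]: "G \<in> borel_measurable borel"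
    unfolding G_def[abs_def] by measurable
  have G_nonneg: "G x \<ge> 0" for x
    using \<open>s > 0\<close> by (simp add: G_def)
  have G_total: "(\<integral>\<^sup>+x. ennreal (G x) \<partial>lborel) = 1"
  proof -
    have "(\<integral>\<^sup>+x. ennreal (G x) \<partial>lborel)
        = ennreal (1 / s) * (\<integral>\<^sup>+k. ennreal s * ennreal (pmf q k) \<partial>count_space UNIV)"
      using nn_integral_floor_affine[OF \<open>s > 0\<close>, of "\<lambda>k. ennreal (s * pmf q k)" a] \<open>s > 0\<close>
      by (simp add: G_def ennreal_mult)
    also have "\<dots> = ennreal (1 / s) * ennreal s"
      by (simp add: nn_integral_cmult nn_integral_pmf)
    also have "\<dots> = 1"
      using \<open>s > 0\<close> by (simp flip: ennreal_mult)
    finally show ?thesis .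
  qed
  have G_square: "(\<integral>\<^sup>+x. ennreal ((G x)\<^sup>2) \<partial>lborel) = ennreal (s * D)"
  proof -
    have "(\<integral>\<^sup>+x. ennreal ((G x)\<^sup>2) \<partial>lborel)
        = ennreal (1 / s) * (\<integral>\<^sup>+k. ennreal (s\<^sup>2) * ennreal ((pmf q k)\<^sup>2) \<partial>count_space UNIV)"
      using nn_integral_floor_affine[OF \<open>s > 0\<close>, of "\<lambda>k. ennreal ((s * pmf q k)\<^sup>2)" a]
      by (simp add: G_def power_mult_distrib ennreal_mult)
    also have "\<dots> = ennreal (1 / s) * ennreal (s\<^sup>2) * ennreal D"
      by (simp add: nn_integral_cmult emeasure_pair_pmf_diagonal[symmetric] D_def
          measure_pmf.emeasure_eq_measure mult.assoc)
    also have "\<dots> = ennreal (s * D)"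
      using \<open>s > 0\<close> by (simp add: power2_eq_square D_def flip: ennreal_mult)
    finally show ?thesis .
  qed
  have close: "\<bar>G x - std_normal_density x\<bar> \<le> e" for x
    using local_limit[of x] by (simp add: G_def)
  have "ennreal (s * D) \<le> ennreal c + ennreal (2 * e)"
    using nn_integral_square_le_if_close[of G lborel std_normal_density, OF _ _ G_nonneg _ close]
    by (simp add: \<open>e \<ge> 0\<close> G_total G_square nn_integral_std_normal_density
        nn_integral_std_normal_density_square c_def)
  then have upper: "s * D \<le> c + 2 * e"
    using \<open>e \<ge> 0\<close> by (simp add: c_def flip: ennreal_plus)
  have "ennreal c \<le> ennreal (s * D) + ennreal (2 * e)"
    using nn_integral_square_le_if_close[of std_normal_density lborel G, OF _ _ _ G_nonneg]
      close
    by (simp add: abs_minus_commute \<open>e \<ge> 0\<close> G_total G_square nn_integral_std_normal_density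
        nn_integral_std_normal_density_square c_def)
  then have lower: "c \<le> s * D + 2 * e"
    using \<open>e \<ge> 0\<close> \<open>s > 0\<close> by (simp add: D_def flip: ennreal_plus)
  have "\<bar>D - c / s\<bar> = \<bar>s * D - c\<bar> / s"
    using \<open>s > 0\<close> by (simp add: field_simps abs_div)
  also have "\<dots> \<le> 2 * e / s"
    using upper lower \<open>s > 0\<close> by (intro divide_right_mono) auto
  finally show ?thesis
    by (simp add: D_def c_def)
qed

theorem lemma2:
  fixes p :: "nat \<Rightarrow> int pmf" and \<mu> \<sigma> \<epsilon> :: "nat \<Rightarrow> real"
  assumes sq_int: "\<And>n. integrable (measure_pmf (p n)) (\<lambda>k. (real_of_int k)\<^sup>2)"
    and mean: "\<And>n. measure_pmf.expectation (p n) real_of_int = \<mu> n"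
    and var: "\<And>n. measure_pmf.variance (p n) real_of_int = (\<sigma> n)\<^sup>2"
    and sigma_inf: "filterlim \<sigma> at_top sequentially"
    and eps_pos: "\<And>n. \<epsilon> n > 0"
    and eps_lim: "\<epsilon> \<longlonglongrightarrow> 0"
    and llt: "\<And>n x. \<bar>\<sigma> n * pmf (p n) \<lfloor>\<mu> n + x * \<sigma> n\<rfloor> - exp (- x\<^sup>2 / 2) / sqrt (2 * pi)\<bar> \<le> \<epsilon> n"
  shows "(\<lambda>n. measure_pmf.prob (pair_pmf (p n) (p n)) {z. fst z = snd z} - 1 / (2 * sqrt pi * \<sigma> n))
           \<in> O(\<lambda>n. \<epsilon> n / \<sigma> n + 1 / (\<sigma> n)\<^sup>2)"
proof (rule bigoI[where c = 2])
  have "eventually (\<lambda>n. \<sigma> n > 0) sequentially"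
    by (rule eventually_compose_filterlim[OF eventually_gt_at_top sigma_inf])
  then show "eventually (\<lambda>n. norm (measure_pmf.prob (pair_pmf (p n) (p n)) {z. fst z = snd z}
      - 1 / (2 * sqrt pi * \<sigma> n)) \<le> 2 * norm (\<epsilon> n / \<sigma> n + 1 / (\<sigma> n)\<^sup>2)) sequentially"
  proof eventually_elim
    case (elim n)
    have "\<bar>measure_pmf.prob (pair_pmf (p n) (p n)) {z. fst z = snd z} - 1 / (2 * sqrt pi * \<sigma> n)\<bar>
        \<le> 2 * \<epsilon> n / \<sigma> n"
      using llt[of n] by (intro collision_probability_close_to_gaussian[OF elim])
        (simp add: std_normal_density_def)
    moreover have "2 * \<epsilon> n / \<sigma> n \<le> 2 * \<bar>\<epsilon> n / \<sigma> n + 1 / (\<sigma> n)\<^sup>2\<bar>"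
      using elim eps_pos[of n] by simp
    ultimately show ?case
      unfolding real_norm_def by linarith
  qed
qed

end
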